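(* Let $A$ be a semicircular Klaus–Shaw potential with support $[X_-,X_+]$. Then $\lambda\mapsto\Xi(\lambda)$ extends to an odd analytic function at $\lambda=0$ with convergent series $\Xi(\lambda)=\mathrm i\sum_{k=1}^\infty\Xi_k\lambda^{2k-1}$ near $0$, where the $\Xi_k$ are real and $\Xi_1=-(X_++X_-)$.
   Context: Let $X_-<X_+$. A semicircular Klaus–Shaw potential is $A:\mathbb R\to[0,\infty)$ such that: $A$ has support $[X_-,X_+]$ and $A(x)=u(x)\sqrt{(X_+-x)(x-X_-)}$ there, where $u\ge c>0$ on $[X_-,X_+]$ and $u$ extends analytically to a complex neighborhood of $[X_-,X_+]$; $A\in L^1\cap C^2(\mathbb R)$ with a unique maximizer $x_0$; $A''(x_0)<0$. $A_{\max}:=A(x_0)$; for $0<s<A_{\max}$, $x_-(s)<x_+(s)$ solve $A(x)=s$. The tail integral is $\Xi(\mathrm is):=(x_+(s)+x_-(s))s+\int_{-\infty}^{x_-(s)}(\sqrt{s^2-A(x)^2}-s)\,dx-\int_{x_+(s)}^{\infty}(\sqrt{s^2-A(x)^2}-s)\,dx$ for $0<s<A_{\max}$, viewed as a function of $\lambda=\mathrm is$. *)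

theory Defs
  imports "HOL-Complex_Analysis.Complex_Analysis"
begin

definition xminus :: "(real \<Rightarrow> real) \<Rightarrow> real \<Rightarrow> real" where
  "xminus A s = Min {x. A x = s}"

definition xplus :: "(real \<Rightarrow> real) \<Rightarrow> real \<Rightarrow> real" where
  "xplus A s = Max {x. A x = s}"

text \<open>The tail integral Xi(i s), for 0 < s < A_max.\<close>
definition Xi_tail :: "(real \<Rightarrow> real) \<Rightarrow> real \<Rightarrow> real" where
  "Xi_tail A s =
     (xplus A s + xminus A s) * s
     + integral {..xminus A s} (\<lambda>x. sqrt (s\<^sup>2 - (A x)\<^sup>2) - s)
     - integral {xplus A s..} (\<lambda>x. sqrt (s\<^sup>2 - (A x)\<^sup>2) - s)"

end

theory Submission
  imports Defs
begin

(* Near X-, A(x)^2 = u(x)^2 (X+ - x)(x - X-) is the restriction of a holomorphic function with a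
   simple zero, so it has a holomorphic inverse psi near 0, and the left turning point is
   x-(s) = psi(s^2). Substituting x = psi(s^2 v) gives

     int_{X-}^{x-(s)} (sqrt (s^2 - A^2) - s) dx = s^3 int_0^1 (sqrt (1 - v) - 1) psi'(s^2 v) dv,

   and integrating the Taylor series of psi' termwise makes this a power series in s^2 as well.
   The right end is the left end of the reflected profile. Altogether Xi(i s) = sum_n e_n s^(2n+1)
   with real e_n and e_0 = X- + X+, and substituting s = -i lambda gives the odd expansion in
   lambda with Xi_1 = -e_0. *)

section \<open>Power series and local inverses of holomorphic functions\<close>

lemma sums_integral_times_power_series:
  fixes d :: "nat \<Rightarrow> real" and h G :: "real \<Rightarrow> real"
  assumes h: "continuous_on {0..1} h" and d: "summable (\<lambda>n. \<bar>d n\<bar>)"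
    and G: "\<And>v. v \<in> {0..1} \<Longrightarrow> (\<lambda>n. d n * v ^ n) sums G v"
  shows "(\<lambda>n. d n * integral {0..1} (\<lambda>v. h v * v ^ n)) sums integral {0..1} (\<lambda>v. h v * G v)"
proof -
  obtain B where B: "\<And>v. v \<in> {0..1} \<Longrightarrow> \<bar>h v\<bar> \<le> B"
    using compact_imp_bounded[OF compact_continuous_image[OF h compact_Icc]]
    by (force simp: bounded_iff)
  have "uniform_limit {0..1} (\<lambda>n v. \<Sum>i<n. h v * (d i * v ^ i))
          (\<lambda>v. \<Sum>i. h v * (d i * v ^ i)) sequentially"
  proof (rule Weierstrass_m_test[OF _ summable_mult[OF d, of B]])
    fix n and v :: real
    assume v: "v \<in> {0..1}"
    have "\<bar>h v\<bar> * (\<bar>d n\<bar> * \<bar>v\<bar> ^ n) \<le> B * (\<bar>d n\<bar> * 1)"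
      using v B[OF v] by (intro mult_mono) (auto intro!: power_le_one)
    then show "norm (h v * (d n * v ^ n)) \<le> B * \<bar>d n\<bar>"
      by (simp add: abs_mult power_abs)
  qed
  moreover have "(\<Sum>i. h v * (d i * v ^ i)) = h v * G v" if "v \<in> {0..1}" for v
    using sums_mult[OF G[OF that], of "h v"] by (simp add: sums_iff)
  ultimately have "uniform_limit {0..1} (\<lambda>n v. \<Sum>i<n. h v * (d i * v ^ i)) (\<lambda>v. h v * G v) sequentially"
    using uniform_limit_cong'[of "{0..1}"] by (metis (no_types, lifting))
  then obtain I J where I: "\<And>n. ((\<lambda>v. \<Sum>i<n. h v * (d i * v ^ i)) has_integral I n) {0..1}"
    and J: "((\<lambda>v. h v * G v) has_integral J) {0..1}" and "I \<longlonglongrightarrow> J"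
    by (rule uniform_limit_integral) (auto intro!: continuous_intros h)
  moreover have "I = (\<lambda>n. \<Sum>i<n. d i * integral {0..1} (\<lambda>v. h v * v ^ i))"
  proof
    fix n
    have "(\<lambda>v. h v * v ^ i) integrable_on {0..1}" for i
      by (intro integrable_continuous_real continuous_intros h)
    then have "((\<lambda>v. \<Sum>i<n. h v * (d i * v ^ i)) has_integral
                 (\<Sum>i<n. d i * integral {0..1} (\<lambda>v. h v * v ^ i))) {0..1}"
      by (intro has_integral_sum) (auto dest: has_integral_mult_right[OF integrable_integral]
            simp: algebra_simps)
    then show "I n = (\<Sum>i<n. d i * integral {0..1} (\<lambda>v. h v * v ^ i))"
      using I has_integral_unique by blast
  qed
  ultimately show ?thesis by (simp add: sums_def integral_unique)
qed

lemma Re_holomorphic_power_series: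
  fixes f :: "complex \<Rightarrow> complex" and w :: real
  assumes "f holomorphic_on ball 0 r" and "\<bar>w\<bar> < r"
  shows "(\<lambda>n. Re ((deriv ^^ n) f 0 / fact n) * w ^ n) sums Re (f (of_real w))"
proof -
  have "(of_real w :: complex) \<in> ball 0 r" using assms(2) by (simp add: dist_norm)
  from sums_Re[OF holomorphic_power_series[OF assms(1) this]]
  have "(\<lambda>n. Re ((deriv ^^ n) f 0 / fact n * of_real w ^ n)) sums Re (f (of_real w))"
    by simp
  moreover have "Re ((deriv ^^ n) f 0 / fact n * of_real w ^ n) = Re ((deriv ^^ n) f 0 / fact n) * w ^ n"
    for n
    by (metis Re_divide_of_real divide_divide_eq_right of_real_divide of_real_fact of_real_power
        times_divide_eq_left)
  ultimately show ?thesis by simp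
qed

lemma summable_norm_Taylor_coeffs:
  fixes f :: "complex \<Rightarrow> complex"
  assumes "f holomorphic_on ball 0 r" and "0 \<le> t" "t < r"
  shows "summable (\<lambda>n. norm ((deriv ^^ n) f 0 / fact n) * t ^ n)"
proof -
  define c where "c n = (deriv ^^ n) f 0 / fact n" for n
  have "of_real ((t + r) / 2) \<in> ball (0::complex) r"
    unfolding mem_ball_0 norm_of_real using assms(2,3) by simp
  from holomorphic_power_series[OF assms(1) this]
  have "summable (\<lambda>n. c n * of_real ((t + r) / 2) ^ n)"
    unfolding c_def by (simp add: sums_summable)
  then have "summable (\<lambda>n. norm (c n * of_real t ^ n))"
    by (rule powser_insidea) (unfold norm_of_real, use assms(2,3) in simp)
  then have "summable (\<lambda>n. norm (c n) * t ^ n)" using assms(2) by (simp add: norm_mult norm_power)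
  then show ?thesis unfolding c_def .
qed

lemma summable_Re_Taylor_coeffs_odd_powers:
  fixes f :: "complex \<Rightarrow> complex"
  assumes "f holomorphic_on ball 0 r" and "0 \<le> t" "t\<^sup>2 < r"
  shows "summable (\<lambda>n. \<bar>Re ((deriv ^^ n) f 0 / fact n)\<bar> * t ^ (2 * n + 1))"
proof -
  have "summable (\<lambda>n. norm ((deriv ^^ n) f 0 / fact n) * (t\<^sup>2) ^ n * t)"
    using summable_mult2[OF summable_norm_Taylor_coeffs[OF assms(1) _ assms(3)]] by simp
  then show ?thesis
  proof (rule summable_comparison_test'[where N = 0])
    fix n
    define c where "c = (deriv ^^ n) f 0 / fact n"
    have "norm (\<bar>Re c\<bar> * t ^ (2 * n + 1)) = \<bar>Re c\<bar> * ((t\<^sup>2) ^ n * t)"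
      using assms(2) by (simp add: abs_mult power_mult power_add)
    also have "\<dots> \<le> norm c * ((t\<^sup>2) ^ n * t)"
      by (intro mult_right_mono abs_Re_le_cmod) (use assms(2) in simp)
    finally show "norm (\<bar>Re c\<bar> * t ^ (2 * n + 1)) \<le> norm c * (t\<^sup>2) ^ n * t"
      by (simp only: mult.assoc)
  qed
qed

lemma Re_holomorphic_has_real_derivative:
  fixes f :: "complex \<Rightarrow> complex"
  assumes "f holomorphic_on S" "open S" "of_real x \<in> S"
  shows "((\<lambda>t. Re (f (of_real t))) has_real_derivative Re (deriv f (of_real x))) (at x)"
proof -
  have "(f has_field_derivative deriv f (of_real x)) (at (of_real x))"
    using holomorphic_derivI[OF assms] .
  then have "((\<lambda>t. f (of_real t)) has_vector_derivative deriv f (of_real x)) (at x)"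
    by (rule has_vector_derivative_real_field)
  then show ?thesis by (simp add: has_vector_derivative_complex_iff)
qed

lemma holomorphic_real_local_inverse:
  fixes F :: "complex \<Rightarrow> complex" and f :: "real \<Rightarrow> real"
  assumes "open U" "F holomorphic_on U" "of_real a \<in> U" "deriv F (of_real a) \<noteq> 0"
    and "a < b" and F_real: "\<And>x. x \<in> {a..b} \<Longrightarrow> F (of_real x) = of_real (f x)"
    and f_cont: "continuous_on {a..b} f" and "f a = 0" and f_pos: "\<And>x. x \<in> {a<..<b} \<Longrightarrow> f x > 0"
  obtains \<psi> \<rho> \<delta> where "\<psi> holomorphic_on ball 0 \<rho>" "\<rho> > 0" "a + \<delta> < b"
    "\<And>x. x \<in> {a..a + \<delta>} \<Longrightarrow> Re (\<psi> (of_real (f x))) = x"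
    "\<And>w. 0 \<le> w \<Longrightarrow> w < \<rho> \<Longrightarrow> Re (\<psi> (of_real w)) \<in> {a..a + \<delta>} \<and> f (Re (\<psi> (of_real w))) = w"
proof -
  obtain r where r: "r > 0" "ball (of_real a) r \<subseteq> U" and inj: "inj_on F (ball (of_real a) r)"
    using has_complex_derivative_locally_injective[OF assms(2,3,1,4)] by blast
  define B where "B = ball (of_real a :: complex) r"
  have F_B: "F holomorphic_on B" using assms(2) r(2) B_def holomorphic_on_subset by blast
  obtain \<psi> where \<psi>: "\<psi> holomorphic_on F ` B" and \<psi>F: "\<And>z. z \<in> B \<Longrightarrow> \<psi> (F z) = z"
    using holomorphic_has_inverse[OF F_B _ inj[folded B_def]] unfolding B_def by blast
  have "F (of_real a) = 0" using F_real[of a] assms(5) \<open>f a = 0\<close> by simp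
  then have "0 \<in> F ` B" using r(1) B_def by (metis centre_in_ball image_eqI)
  moreover have "open (F ` B)" using open_mapping_thm3[OF F_B _ inj[folded B_def]] B_def by simp
  ultimately obtain \<rho>1 where "\<rho>1 > 0" "ball 0 \<rho>1 \<subseteq> F ` B"
    using open_contains_ball by blast
  define \<delta> where "\<delta> = min (r / 2) ((b - a) / 2)"
  have \<delta>: "0 < \<delta>" "a + \<delta> < b" "\<delta> < r" using r(1) assms(5) by (auto simp: \<delta>_def min_def field_simps)
  define \<rho> where "\<rho> = min \<rho>1 (f (a + \<delta>))"
  have "\<rho> > 0" using \<open>\<rho>1 > 0\<close> f_pos[of "a + \<delta>"] \<delta> by (simp add: \<rho>_def)
  have in_B: "of_real x \<in> B" if "x \<in> {a..a + \<delta>}" for x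
    using that \<delta>(3) by (simp add: B_def dist_norm flip: of_real_diff)
  have inverse: "Re (\<psi> (of_real (f x))) = x" if "x \<in> {a..a + \<delta>}" for x
    using \<psi>F[OF in_B[OF that]] F_real[of x] that \<delta>(2) by simp
  have onto: "Re (\<psi> (of_real w)) \<in> {a..a + \<delta>} \<and> f (Re (\<psi> (of_real w))) = w"
    if w: "0 \<le> w" "w < \<rho>" for w
  proof -
    have "w \<le> f (a + \<delta>)" using w by (simp add: \<rho>_def)
    then obtain x where "x \<in> {a..a + \<delta>}" "f x = w"
      using IVT'[of f a w "a + \<delta>"] w(1) \<delta> \<open>f a = 0\<close>
        continuous_on_subset[OF f_cont, of "{a..a + \<delta>}"] by auto
    then show ?thesis using inverse by auto
  qed
  have "ball 0 \<rho> \<subseteq> F ` B" using \<open>ball 0 \<rho>1 \<subseteq> F ` B\<close> by (auto simp: \<rho>_def)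
  then have "\<psi> holomorphic_on ball 0 \<rho>" using \<psi> holomorphic_on_subset by blast
  from that[OF this \<open>\<rho> > 0\<close> \<delta>(2) inverse onto] show ?thesis .
qed

section \<open>Integrals along a level of the inverse function\<close>

lemma integral_sqrt_level_substitution:
  fixes A p p' :: "real \<Rightarrow> real"
  assumes "0 < s" and A: "continuous_on {c..d} A" and range: "p ` {0..s\<^sup>2} \<subseteq> {c..d}"
    and p': "\<And>w. w \<in> {0..s\<^sup>2} \<Longrightarrow> (p has_real_derivative p' w) (at w)"
    and level: "\<And>w. w \<in> {0..s\<^sup>2} \<Longrightarrow> (A (p w))\<^sup>2 = w"
    and "p 0 \<le> p (s\<^sup>2)"
  shows "integral {p 0..p (s\<^sup>2)} (\<lambda>x. sqrt (s\<^sup>2 - (A x)\<^sup>2) - s)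
           = s ^ 3 * integral {0..1} (\<lambda>v. (sqrt (1 - v) - 1) * p' (s\<^sup>2 * v))"
proof -
  define f where "f x = sqrt (s\<^sup>2 - (A x)\<^sup>2) - s" for x
  define q where "q v = p (s\<^sup>2 * v)" for v
  have scaled: "s\<^sup>2 * v \<in> {0..s\<^sup>2}" if "v \<in> {0..1}" for v
    using that mult_left_le[of v "s\<^sup>2"] by auto
  have q': "(q has_real_derivative p' (s\<^sup>2 * v) * s\<^sup>2) (at v within {0..1})" if "v \<in> {0..1}" for v
  proof -
    have "((\<lambda>v. s\<^sup>2 * v) has_real_derivative s\<^sup>2) (at v within {0..1})"
      by (auto intro!: derivative_eq_intros)
    from DERIV_chain2[OF p'[OF scaled[OF that]] this] show ?thesis by (simp add: q_def[abs_def])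
  qed
  have substitution:
    "((\<lambda>v. (p' (s\<^sup>2 * v) * s\<^sup>2) *\<^sub>R f (q v)) has_integral integral {q 0..q 1} f) {0..1}"
  proof (rule has_integral_substitution[where c = c and d = d])
    show "q 0 \<le> q 1" using assms(6) by (simp add: q_def)
    show "q ` {0..1} \<subseteq> {c..d}" using range scaled by (auto simp: q_def)
    show "continuous_on {c..d} f" unfolding f_def by (intro continuous_intros A)
  qed (use q' in auto)
  have "(p' (s\<^sup>2 * v) * s\<^sup>2) *\<^sub>R f (q v) = s ^ 3 * ((sqrt (1 - v) - 1) * p' (s\<^sup>2 * v))"
    if "v \<in> {0..1}" for v
  proof -
    have "f (q v) = sqrt (s\<^sup>2 * (1 - v)) - s"
      using level[OF scaled[OF that]] by (simp add: f_def q_def algebra_simps)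
    also have "\<dots> = s * (sqrt (1 - v) - 1)"
      unfolding real_sqrt_mult real_sqrt_abs using \<open>0 < s\<close> by (simp add: algebra_simps)
    finally show ?thesis by (simp add: power2_eq_square power3_eq_cube)
  qed
  from has_integral_eq[OF this substitution]
  have "integral {0..1} (\<lambda>v. s ^ 3 * ((sqrt (1 - v) - 1) * p' (s\<^sup>2 * v))) = integral {q 0..q 1} f"
    by (rule integral_unique)
  then show ?thesis by (simp add: q_def f_def[abs_def])
qed

definition sqrt_moment :: "nat \<Rightarrow> real" where
  "sqrt_moment n = integral {0..1} (\<lambda>v. (sqrt (1 - v) - 1) * v ^ n)"

lemma abs_sqrt_moment_le_1: "\<bar>sqrt_moment n\<bar> \<le> 1"
proof -
  have "norm (integral {0..1} (\<lambda>v. (sqrt (1 - v) - 1) * v ^ n)) \<le> 1 * (1 - 0)"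
  proof (rule integral_bound)
    show "continuous_on {0..1} (\<lambda>v. (sqrt (1 - v) - 1) * v ^ n)" by (intro continuous_intros)
  next
    fix v :: real
    assume v: "v \<in> {0..1}"
    then have "\<bar>sqrt (1 - v) - 1\<bar> * \<bar>v\<bar> ^ n \<le> 1 * 1"
      by (intro mult_mono) (auto intro!: power_le_one)
    then show "norm ((sqrt (1 - v) - 1) * v ^ n) \<le> 1" by (simp add: abs_mult power_abs)
  qed simp_all
  then show ?thesis by (simp add: sqrt_moment_def)
qed

lemma summable_Re_Taylor_moment_odd_powers:
  fixes f :: "complex \<Rightarrow> complex"
  assumes "f holomorphic_on ball 0 r" and "0 \<le> t" "t\<^sup>2 < r"
  shows "summable (\<lambda>k. \<bar>Re ((deriv ^^ k) f 0 / fact k) * sqrt_moment k\<bar> * t ^ (2 * k + 3))"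
proof -
  have "summable (\<lambda>k. \<bar>Re ((deriv ^^ k) f 0 / fact k)\<bar> * t ^ (2 * k + 1) * t\<^sup>2)"
    by (intro summable_mult2 summable_Re_Taylor_coeffs_odd_powers[OF assms])
  then show ?thesis
  proof (rule summable_comparison_test'[where N = 0])
    fix k
    define D where "D = \<bar>Re ((deriv ^^ k) f 0 / fact k)\<bar>"
    have "norm (\<bar>Re ((deriv ^^ k) f 0 / fact k) * sqrt_moment k\<bar> * t ^ (2 * k + 3))
            = D * t ^ (2 * k + 1) * t\<^sup>2 * \<bar>sqrt_moment k\<bar>"
      using assms(2) by (simp add: D_def abs_mult power_add power2_eq_square numeral_3_eq_3 mult_ac)
    also have "\<dots> \<le> D * t ^ (2 * k + 1) * t\<^sup>2"
      using abs_sqrt_moment_le_1[of k] assms(2) by (intro mult_left_le) (auto simp: D_def)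
    finally show "norm (\<bar>Re ((deriv ^^ k) f 0 / fact k) * sqrt_moment k\<bar> * t ^ (2 * k + 3))
                    \<le> D * t ^ (2 * k + 1) * t\<^sup>2" .
  qed
qed

lemma integral_sqrt_level_series:
  fixes A :: "real \<Rightarrow> real" and \<psi> :: "complex \<Rightarrow> complex"
  assumes \<psi>: "\<psi> holomorphic_on ball 0 \<rho>" and s: "0 < s" "s\<^sup>2 < \<rho>"
    and A: "continuous_on {c..d} A"
    and level: "\<And>w. 0 \<le> w \<Longrightarrow> w < \<rho> \<Longrightarrow>
                  Re (\<psi> (of_real w)) \<in> {c..d} \<and> (A (Re (\<psi> (of_real w))))\<^sup>2 = w"
    and ordered: "Re (\<psi> 0) \<le> Re (\<psi> (of_real (s\<^sup>2)))"
  shows "(\<lambda>n. Re ((deriv ^^ n) (deriv \<psi>) 0 / fact n) * sqrt_moment n * s ^ (2 * n + 3)) sums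
           integral {Re (\<psi> 0)..Re (\<psi> (of_real (s\<^sup>2)))} (\<lambda>x. sqrt (s\<^sup>2 - (A x)\<^sup>2) - s)"
proof -
  define p where "p w = Re (\<psi> (of_real w))" for w
  define p' where "p' w = Re (deriv \<psi> (of_real w))" for w
  define D where "D n = Re ((deriv ^^ n) (deriv \<psi>) 0 / fact n)" for n
  have d\<psi>: "deriv \<psi> holomorphic_on ball 0 \<rho>" by (rule holomorphic_deriv[OF \<psi> open_ball])
  have small: "\<bar>w\<bar> < \<rho>" if "w \<in> {0..s\<^sup>2}" for w using that s(2) by auto
  have "integral {p 0..p (s\<^sup>2)} (\<lambda>x. sqrt (s\<^sup>2 - (A x)\<^sup>2) - s)
          = s ^ 3 * integral {0..1} (\<lambda>v. (sqrt (1 - v) - 1) * p' (s\<^sup>2 * v))"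
  proof (rule integral_sqrt_level_substitution[OF s(1) A])
    show "p ` {0..s\<^sup>2} \<subseteq> {c..d}" using level small by (auto simp: p_def)
    show "(A (p w))\<^sup>2 = w" if "w \<in> {0..s\<^sup>2}" for w
      using level small[OF that] that by (simp add: p_def)
    show "(p has_real_derivative p' w) (at w)" if "w \<in> {0..s\<^sup>2}" for w
      unfolding p_def[abs_def] p'_def
      by (rule Re_holomorphic_has_real_derivative[OF \<psi> open_ball]) (use small[OF that] in simp)
    show "p 0 \<le> p (s\<^sup>2)" using ordered by (simp add: p_def)
  qed
  moreover have "(\<lambda>n. D n * s ^ (2 * n) * sqrt_moment n) sums
                   integral {0..1} (\<lambda>v. (sqrt (1 - v) - 1) * p' (s\<^sup>2 * v))"
    unfolding sqrt_moment_def
  proof (rule sums_integral_times_power_series[where h = "\<lambda>v. sqrt (1 - v) - 1" and G = "\<lambda>v. p' (s\<^sup>2 * v)"])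
    show "continuous_on {0..1} (\<lambda>v. sqrt (1 - v) - 1)" by (intro continuous_intros)
    have "summable (\<lambda>n. norm ((deriv ^^ n) (deriv \<psi>) 0 / fact n) * (s\<^sup>2) ^ n)"
      using summable_norm_Taylor_coeffs[OF d\<psi>] s(2) by simp
    then show "summable (\<lambda>n. \<bar>D n * s ^ (2 * n)\<bar>)"
      by (rule summable_comparison_test'[where N = 0])
        (simp add: D_def abs_mult power_mult abs_Re_le_cmod mult_right_mono)
    show "(\<lambda>n. D n * s ^ (2 * n) * v ^ n) sums p' (s\<^sup>2 * v)" if "v \<in> {0..1}" for v
      using Re_holomorphic_power_series[OF d\<psi> small, of "s\<^sup>2 * v"] that
        mult_left_le[of v "s\<^sup>2"]
      by (simp add: D_def p'_def power_mult power_mult_distrib mult.assoc)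
  qed
  ultimately have "(\<lambda>n. s ^ 3 * (D n * s ^ (2 * n) * sqrt_moment n)) sums
      integral {p 0..p (s\<^sup>2)} (\<lambda>x. sqrt (s\<^sup>2 - (A x)\<^sup>2) - s)"
    by (simp add: sums_mult)
  moreover have "(\<lambda>n. s ^ 3 * (D n * s ^ (2 * n) * sqrt_moment n))
                   = (\<lambda>n. D n * sqrt_moment n * s ^ (2 * n + 3))"
    by (simp add: power_add algebra_simps)
  ultimately show ?thesis by (simp only: D_def p_def of_real_0)
qed

lemma sums_shift_odd_powers:
  fixes b :: "nat \<Rightarrow> real"
  assumes "(\<lambda>k. b k * s ^ (2 * k + 3)) sums I"
  shows "(\<lambda>n. (case n of 0 \<Rightarrow> 0 | Suc k \<Rightarrow> b k) * s ^ (2 * n + 1)) sums I"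
proof -
  have "(\<lambda>k. (case Suc k of 0 \<Rightarrow> 0 | Suc k \<Rightarrow> b k) * s ^ (2 * Suc k + 1)) sums I"
    using assms by (simp add: numeral_3_eq_3)
  from sums_Suc_iff[THEN iffD1, OF this] show ?thesis by simp
qed

lemma summable_shift_odd_powers:
  fixes b :: "nat \<Rightarrow> real"
  assumes "summable (\<lambda>k. \<bar>b k\<bar> * t ^ (2 * k + 3))"
  shows "summable (\<lambda>n. \<bar>case n of 0 \<Rightarrow> 0 | Suc k \<Rightarrow> b k\<bar> * t ^ (2 * n + 1))"
proof -
  have "summable (\<lambda>k. \<bar>case Suc k of 0 \<Rightarrow> 0 | Suc k \<Rightarrow> b k\<bar> * t ^ (2 * Suc k + 1))"
    using assms by (simp add: numeral_3_eq_3)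
  then show ?thesis by (rule summable_Suc_iff[THEN iffD1])
qed

section \<open>The ends of a semicircular profile\<close>

locale semicircular_profile =
  fixes A u :: "real \<Rightarrow> real" and g :: "complex \<Rightarrow> complex" and U :: "complex set"
    and Xm Xp :: real
  assumes ends: "Xm < Xp"
    and semicircle: "\<And>x. x \<in> {Xm..Xp} \<Longrightarrow> A x = u x * sqrt ((Xp - x) * (x - Xm))"
    and u_pos: "\<And>x. x \<in> {Xm..Xp} \<Longrightarrow> u x > 0"
    and open_U: "open U" and interval_in_U: "of_real ` {Xm..Xp} \<subseteq> U"
    and g_holomorphic: "g holomorphic_on U"
    and g_extends_u: "\<And>x. x \<in> {Xm..Xp} \<Longrightarrow> g (of_real x) = of_real (u x)"
begin

lemma continuous_on_profile: "continuous_on {Xm..Xp} A"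
proof -
  have "continuous_on {Xm..Xp} (\<lambda>x. Re (g (of_real x)) * sqrt ((Xp - x) * (x - Xm)))"
    using interval_in_U
    by (intro continuous_intros continuous_on_compose2[OF holomorphic_on_imp_continuous_on[OF g_holomorphic]])
      auto
  then show ?thesis by (rule continuous_on_cong[THEN iffD1, rotated 2]) (auto simp: semicircle g_extends_u)
qed

lemma profile_pos: "x \<in> {Xm<..<Xp} \<Longrightarrow> A x > 0"
  using semicircle u_pos by simp

lemma profile_nonneg:
  assumes "x \<in> {Xm..Xp}"
  shows "A x \<ge> 0"
proof -
  have "(Xp - x) * (x - Xm) \<ge> 0" using assms by simp
  then show ?thesis using semicircle[OF assms] u_pos[OF assms] by simp
qed

lemma square_local_inverse:
  obtains \<psi> \<rho> \<delta> where "\<psi> holomorphic_on ball 0 \<rho>" "\<rho> > 0" "Xm + \<delta> < Xp"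
    "\<And>x. x \<in> {Xm..Xm + \<delta>} \<Longrightarrow> Re (\<psi> (of_real ((A x)\<^sup>2))) = x"
    "\<And>w. 0 \<le> w \<Longrightarrow> w < \<rho> \<Longrightarrow>
       Re (\<psi> (of_real w)) \<in> {Xm..Xm + \<delta>} \<and> (A (Re (\<psi> (of_real w))))\<^sup>2 = w"
proof -
  define F where "F z = (g z)\<^sup>2 * ((of_real Xp - z) * (z - of_real Xm))" for z
  have F_holomorphic: "F holomorphic_on U" unfolding F_def by (intro holomorphic_intros g_holomorphic)
  have Xm_in_U: "of_real Xm \<in> U" using interval_in_U ends by auto
  have F_real: "F (of_real x) = of_real ((A x)\<^sup>2)" if "x \<in> {Xm..Xp}" for x
    using that semicircle[OF that] g_extends_u[OF that] by (simp add: F_def power_mult_distrib)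
  obtain g' where "(g has_field_derivative g') (at (of_real Xm))"
    using holomorphic_on_imp_differentiable_at[OF g_holomorphic open_U Xm_in_U]
    by (auto simp: field_differentiable_def)
  then have "(F has_field_derivative (g (of_real Xm))\<^sup>2 * (of_real Xp - of_real Xm)) (at (of_real Xm))"
    unfolding F_def[abs_def] by (auto intro!: derivative_eq_intros simp: algebra_simps)
  then have "deriv F (of_real Xm) = of_real ((u Xm)\<^sup>2 * (Xp - Xm))"
    using g_extends_u[of Xm] ends by (simp add: DERIV_imp_deriv)
  moreover have "u Xm > 0" using u_pos ends by simp
  ultimately have deriv_nonzero: "deriv F (of_real Xm) \<noteq> 0" using ends by simp
  show ?thesis
  proof (rule holomorphic_real_local_inverse[OF open_U F_holomorphic Xm_in_U deriv_nonzero ends F_real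
        continuous_on_power[OF continuous_on_profile, of 2]])
    show "(A Xm)\<^sup>2 = 0" using semicircle[of Xm] ends by simp
    show "(A x)\<^sup>2 > 0" if "x \<in> {Xm<..<Xp}" for x using profile_pos[OF that] by simp
  qed (assumption | rule that)+
qed

lemma leftmost_turning_point_inverse:
  obtains \<psi> \<rho> where "\<psi> holomorphic_on ball 0 \<rho>" "\<rho> > 0" "Re (\<psi> 0) = Xm"
    "\<And>w. 0 \<le> w \<Longrightarrow> w < \<rho> \<Longrightarrow>
       Re (\<psi> (of_real w)) \<in> {Xm..Xp} \<and> (A (Re (\<psi> (of_real w))))\<^sup>2 = w"
    "\<And>s y. 0 < s \<Longrightarrow> s\<^sup>2 < \<rho> \<Longrightarrow> Xm \<le> y \<Longrightarrow> A y = s \<Longrightarrow> (\<And>x. Xm \<le> x \<Longrightarrow> x < y \<Longrightarrow> A x < s) \<Longrightarrow>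
       Re (\<psi> (of_real (s\<^sup>2))) = y"
proof -
  obtain \<psi> \<rho> \<delta> where "\<psi> holomorphic_on ball 0 \<rho>" "\<rho> > 0" "Xm + \<delta> < Xp"
    and inverse: "\<And>x. x \<in> {Xm..Xm + \<delta>} \<Longrightarrow> Re (\<psi> (of_real ((A x)\<^sup>2))) = x"
    and onto: "\<And>w. 0 \<le> w \<Longrightarrow> w < \<rho> \<Longrightarrow>
                 Re (\<psi> (of_real w)) \<in> {Xm..Xm + \<delta>} \<and> (A (Re (\<psi> (of_real w))))\<^sup>2 = w"
    using square_local_inverse by blast
  have "Re (\<psi> 0) = Xm"
    using inverse[of Xm] onto[of 0] \<open>\<rho> > 0\<close> semicircle[of Xm] ends by simp
  moreover have "Re (\<psi> (of_real (s\<^sup>2))) = y"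
    if s: "0 < s" "s\<^sup>2 < \<rho>" and y: "Xm \<le> y" "A y = s" and leftmost: "\<And>x. Xm \<le> x \<Longrightarrow> x < y \<Longrightarrow> A x < s"
    for s y
  proof -
    define y' where "y' = Re (\<psi> (of_real (s\<^sup>2)))"
    have y': "y' \<in> {Xm..Xm + \<delta>}" "(A y')\<^sup>2 = s\<^sup>2" using onto[of "s\<^sup>2"] s by (auto simp: y'_def)
    then have "A y' = s"
      using profile_nonneg[of y'] \<open>Xm + \<delta> < Xp\<close> s(1) by (auto simp: power2_eq_iff_nonneg)
    \<comment> \<open>\<open>\<psi>\<close> inverts \<open>A\<^sup>2\<close> only on \<open>[Xm, Xm + \<delta>]\<close>; being leftmost puts \<open>y\<close> there.\<close>
    then have "y \<le> y'" using leftmost[of y'] y'(1) by force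
    then have "y \<in> {Xm..Xm + \<delta>}" using y(1) y'(1) by simp
    then show ?thesis using inverse[of y] y(2) by simp
  qed
  moreover have "Re (\<psi> (of_real w)) \<in> {Xm..Xp} \<and> (A (Re (\<psi> (of_real w))))\<^sup>2 = w"
    if "0 \<le> w" "w < \<rho>" for w
    using onto[OF that] \<open>Xm + \<delta> < Xp\<close> by auto
  ultimately show ?thesis using that \<open>\<rho> > 0\<close> \<open>\<psi> holomorphic_on ball 0 \<rho>\<close> by blast
qed

lemma left_end_series:
  obtains \<beta> \<rho> where "\<beta> 0 = Xm" "\<rho> > 0"
    "\<And>t. 0 \<le> t \<Longrightarrow> t < \<rho> \<Longrightarrow> summable (\<lambda>n. \<bar>\<beta> n\<bar> * t ^ (2 * n + 1))"
    "\<And>s y. 0 < s \<Longrightarrow> s < \<rho> \<Longrightarrow> Xm \<le> y \<Longrightarrow> A y = s \<Longrightarrow> (\<And>x. Xm \<le> x \<Longrightarrow> x < y \<Longrightarrow> A x < s) \<Longrightarrow>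
       (\<lambda>n. \<beta> n * s ^ (2 * n + 1)) sums (y * s + integral {Xm..y} (\<lambda>x. sqrt (s\<^sup>2 - (A x)\<^sup>2) - s))"
proof -
  obtain \<psi> \<rho> where \<psi>: "\<psi> holomorphic_on ball 0 \<rho>" and "\<rho> > 0" and \<psi>0: "Re (\<psi> 0) = Xm"
    and level: "\<And>w. 0 \<le> w \<Longrightarrow> w < \<rho> \<Longrightarrow>
                  Re (\<psi> (of_real w)) \<in> {Xm..Xp} \<and> (A (Re (\<psi> (of_real w))))\<^sup>2 = w"
    and turning_point: "\<And>s y. 0 < s \<Longrightarrow> s\<^sup>2 < \<rho> \<Longrightarrow> Xm \<le> y \<Longrightarrow> A y = s \<Longrightarrow>
                          (\<And>x. Xm \<le> x \<Longrightarrow> x < y \<Longrightarrow> A x < s) \<Longrightarrow> Re (\<psi> (of_real (s\<^sup>2))) = y"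
    using leftmost_turning_point_inverse by blast
  have d\<psi>: "deriv \<psi> holomorphic_on ball 0 \<rho>" by (rule holomorphic_deriv[OF \<psi> open_ball])
  define a where "a n = Re ((deriv ^^ n) \<psi> 0 / fact n)" for n
  define b where "b n = Re ((deriv ^^ n) (deriv \<psi>) 0 / fact n) * sqrt_moment n" for n
  define \<gamma> where "\<gamma> n = (case n of 0 \<Rightarrow> 0 | Suc k \<Rightarrow> b k)" for n
  have below: "t\<^sup>2 < \<rho>" if "0 \<le> t" "t < sqrt \<rho>" for t
    using that real_sqrt_less_iff[of "t\<^sup>2" \<rho>] by simp
  have "summable (\<lambda>n. \<bar>a n + \<gamma> n\<bar> * t ^ (2 * n + 1))" if t: "0 \<le> t" "t < sqrt \<rho>" for t
  proof (rule summable_comparison_test'[where N = 0])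
    show "summable (\<lambda>n. \<bar>a n\<bar> * t ^ (2 * n + 1) + \<bar>\<gamma> n\<bar> * t ^ (2 * n + 1))"
      unfolding a_def \<gamma>_def b_def
      by (intro summable_add summable_Re_Taylor_coeffs_odd_powers[OF \<psi> t(1) below[OF t]]
          summable_shift_odd_powers summable_Re_Taylor_moment_odd_powers[OF d\<psi> t(1) below[OF t]])
  qed (use t(1) in \<open>simp add: abs_mult distrib_right[symmetric] mult_right_mono\<close>)
  moreover have "(\<lambda>n. (a n + \<gamma> n) * s ^ (2 * n + 1)) sums
                   (y * s + integral {Xm..y} (\<lambda>x. sqrt (s\<^sup>2 - (A x)\<^sup>2) - s))"
    if s: "0 < s" "s < sqrt \<rho>" and y: "Xm \<le> y" "A y = s"
      and leftmost: "\<And>x. Xm \<le> x \<Longrightarrow> x < y \<Longrightarrow> A x < s"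
    for s y
  proof -
    have s2: "s\<^sup>2 < \<rho>" using below s by simp
    have y_eq: "Re (\<psi> (of_real (s\<^sup>2))) = y" using turning_point[OF s(1) s2 y leftmost] by simp
    have "(\<lambda>n. a n * (s\<^sup>2) ^ n * s) sums (y * s)"
      using sums_mult2[OF Re_holomorphic_power_series[OF \<psi>, of "s\<^sup>2"]] s2 y_eq by (simp add: a_def)
    moreover have "(\<lambda>n. a n * (s\<^sup>2) ^ n * s) = (\<lambda>n. a n * s ^ (2 * n + 1))"
      by (simp only: power_add power_mult power_one_right mult.assoc)
    ultimately have "(\<lambda>n. a n * s ^ (2 * n + 1)) sums (y * s)" by simp
    moreover have "(\<lambda>k. b k * s ^ (2 * k + 3)) sums integral {Xm..y} (\<lambda>x. sqrt (s\<^sup>2 - (A x)\<^sup>2) - s)"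
      using integral_sqrt_level_series[OF \<psi> s(1) s2 continuous_on_profile level] \<psi>0 y_eq y(1)
      by (simp only: b_def)
    ultimately show ?thesis
      unfolding \<gamma>_def distrib_right by (rule sums_add[OF _ sums_shift_odd_powers])
  qed
  moreover have "a 0 + \<gamma> 0 = Xm" using \<psi>0 by (simp add: a_def \<gamma>_def)
  ultimately show ?thesis using that[of "\<lambda>n. a n + \<gamma> n" "sqrt \<rho>"] \<open>\<rho> > 0\<close> by simp
qed

lemma reflected:
  "semicircular_profile (\<lambda>x. A (- x)) (\<lambda>x. u (- x)) (\<lambda>z. g (- z)) (uminus ` U) (- Xp) (- Xm)"
proof
  show "- Xp < - Xm" using ends by simp
  show "A (- x) = u (- x) * sqrt ((- Xm - x) * (x - - Xp))" if "x \<in> {- Xp..- Xm}" for x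
  proof -
    have "(Xp - - x) * (- x - Xm) = (- Xm - x) * (x - - Xp)" by algebra
    then show ?thesis using semicircle[of "- x"] that by simp
  qed
  show "u (- x) > 0" if "x \<in> {- Xp..- Xm}" for x using u_pos[of "- x"] that by simp
  show "open (uminus ` U)" using open_U by (rule open_negations)
  show "of_real ` {- Xp..- Xm} \<subseteq> uminus ` U"
  proof
    fix z :: complex
    assume "z \<in> of_real ` {- Xp..- Xm}"
    then obtain x where "x \<in> {- Xp..- Xm}" "z = of_real x" by blast
    then have "- z = of_real (- x)" "- x \<in> {Xm..Xp}" by auto
    then have "- z \<in> U" using interval_in_U by auto
    then show "z \<in> uminus ` U" using image_eqI[of z uminus "- z" U] by simp
  qed
  have "(g \<circ> uminus) holomorphic_on uminus ` U"
    by (rule holomorphic_on_compose) (auto intro!: holomorphic_intros simp: image_image g_holomorphic)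
  then show "(\<lambda>z. g (- z)) holomorphic_on uminus ` U" by (simp add: o_def)
  show "g (- of_real x) = of_real (u (- x))" if "x \<in> {- Xp..- Xm}" for x
    using g_extends_u[of "- x"] that by simp
qed

lemma right_end_series:
  obtains \<beta> \<rho> where "\<beta> 0 = - Xp" "\<rho> > 0"
    "\<And>t. 0 \<le> t \<Longrightarrow> t < \<rho> \<Longrightarrow> summable (\<lambda>n. \<bar>\<beta> n\<bar> * t ^ (2 * n + 1))"
    "\<And>s y. 0 < s \<Longrightarrow> s < \<rho> \<Longrightarrow> y \<le> Xp \<Longrightarrow> A y = s \<Longrightarrow> (\<And>x. y < x \<Longrightarrow> x \<le> Xp \<Longrightarrow> A x < s) \<Longrightarrow>
       (\<lambda>n. \<beta> n * s ^ (2 * n + 1)) sums (- y * s + integral {y..Xp} (\<lambda>x. sqrt (s\<^sup>2 - (A x)\<^sup>2) - s))"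
proof -
  interpret reflected: semicircular_profile "\<lambda>x. A (- x)" "\<lambda>x. u (- x)" "\<lambda>z. g (- z)" "uminus ` U" "- Xp" "- Xm"
    by (rule reflected)
  obtain \<beta> \<rho> where "\<beta> 0 = - Xp" "\<rho> > 0"
    and summable: "\<And>t. 0 \<le> t \<Longrightarrow> t < \<rho> \<Longrightarrow> summable (\<lambda>n. \<bar>\<beta> n\<bar> * t ^ (2 * n + 1))"
    and sums: "\<And>s y. 0 < s \<Longrightarrow> s < \<rho> \<Longrightarrow> - Xp \<le> y \<Longrightarrow> A (- y) = s \<Longrightarrow>
                 (\<And>x. - Xp \<le> x \<Longrightarrow> x < y \<Longrightarrow> A (- x) < s) \<Longrightarrow>
                 (\<lambda>n. \<beta> n * s ^ (2 * n + 1)) sums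
                   (y * s + integral {- Xp..y} (\<lambda>x. sqrt (s\<^sup>2 - (A (- x))\<^sup>2) - s))"
    using reflected.left_end_series by blast
  show ?thesis
  proof (rule that[OF \<open>\<beta> 0 = - Xp\<close> \<open>\<rho> > 0\<close> summable])
    fix s y
    assume s: "0 < s" "s < \<rho>" and y: "y \<le> Xp" "A y = s"
      and rightmost: "\<And>x. y < x \<Longrightarrow> x \<le> Xp \<Longrightarrow> A x < s"
    have "- Xp \<le> - y" "A (- (- y)) = s" using y by simp_all
    moreover have "A (- x) < s" if "- Xp \<le> x" "x < - y" for x using rightmost[of "- x"] that by simp
    ultimately have "(\<lambda>n. \<beta> n * s ^ (2 * n + 1)) sums
            (- y * s + integral {- Xp..- y} (\<lambda>x. sqrt (s\<^sup>2 - (A (- x))\<^sup>2) - s))"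
      by (rule sums[OF s])
    then show "(\<lambda>n. \<beta> n * s ^ (2 * n + 1)) sums
                 (- y * s + integral {y..Xp} (\<lambda>x. sqrt (s\<^sup>2 - (A x)\<^sup>2) - s))"
      using Henstock_Kurzweil_Integration.integral_reflect_real[of Xp y "\<lambda>x. sqrt (s\<^sup>2 - (A x)\<^sup>2) - s"] by simp
  qed
qed

end

section \<open>The tail integral\<close>

lemma level_set_two_points:
  fixes A :: "real \<Rightarrow> real"
  assumes cont: "continuous_on {Xm..Xp} A" and ends: "A Xm = 0" "A Xp = 0"
    and outside: "\<And>x. x \<notin> {Xm..Xp} \<Longrightarrow> A x = 0"
    and s: "0 < s" "s < A x0" and two: "card {x. A x = s} = 2"
  obtains a b where "Xm \<le> a" "a < b" "b \<le> Xp" "{x. A x = s} = {a, b}"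
    "\<And>x. Xm \<le> x \<Longrightarrow> x < a \<Longrightarrow> A x < s" "\<And>x. b < x \<Longrightarrow> x \<le> Xp \<Longrightarrow> A x < s"
proof -
  have x0: "x0 \<in> {Xm..Xp}" using outside s by force
  have cont_sub: "continuous_on {c..d} A" if "Xm \<le> c" "d \<le> Xp" for c d
    using continuous_on_subset[OF cont] that by auto
  obtain a where a: "Xm \<le> a" "a \<le> x0" "A a = s"
    using IVT'[of A Xm s x0] cont_sub[of Xm x0] ends s x0 by auto
  obtain b where b: "x0 \<le> b" "b \<le> Xp" "A b = s"
    using IVT2'[of A Xp s x0] cont_sub[of x0 Xp] ends s x0 by auto
  have "a < b" using a b s by (cases "a = x0") auto
  have "finite {x. A x = s}" using two by (metis card.infinite zero_neq_numeral)
  moreover have "{a, b} \<subseteq> {x. A x = s}" "card {a, b} = 2" using a b \<open>a < b\<close> by auto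
  ultimately have level: "{x. A x = s} = {a, b}" using two by (metis card_subset_eq)
  have "A x < s" if x: "Xm \<le> x" "x < a" for x
  proof (rule ccontr)
    assume "\<not> A x < s"
    then obtain z where "Xm \<le> z" "z \<le> x" "A z = s"
      using IVT'[of A Xm s x] cont_sub[of Xm x] x ends s a x0 by auto
    then have "z \<in> {a, b}" using level by blast
    then show False using \<open>z \<le> x\<close> x \<open>a < b\<close> by auto
  qed
  moreover have "A x < s" if x: "b < x" "x \<le> Xp" for x
  proof (rule ccontr)
    assume "\<not> A x < s"
    then obtain z where "x \<le> z" "z \<le> Xp" "A z = s"
      using IVT2'[of A Xp s x] cont_sub[of x Xp] x ends s b x0 by auto
    then have "z \<in> {a, b}" using level by blast
    then show False using \<open>x \<le> z\<close> x \<open>a < b\<close> by auto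
  qed
  ultimately show ?thesis using that a b \<open>a < b\<close> level by blast
qed

lemma Xi_tail_eq_end_contributions:
  fixes A :: "real \<Rightarrow> real"
  assumes outside: "\<And>x. x \<notin> {Xm..Xp} \<Longrightarrow> A x = 0" and "0 < s"
    and level: "{x. A x = s} = {a, b}" and "Xm \<le> a" "a < b" "b \<le> Xp"
  shows "Xi_tail A s = (a * s + integral {Xm..a} (\<lambda>x. sqrt (s\<^sup>2 - (A x)\<^sup>2) - s))
                      - (- b * s + integral {b..Xp} (\<lambda>x. sqrt (s\<^sup>2 - (A x)\<^sup>2) - s))"
proof -
  define f where "f x = sqrt (s\<^sup>2 - (A x)\<^sup>2) - s" for x
  have f0: "f x = 0" if "x \<notin> {Xm..Xp}" for x using outside[OF that] \<open>0 < s\<close> by (simp add: f_def)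
  have no_spikes: "{x \<in> {..a} - {Xm..a}. f x \<noteq> 0} = {}" "{x \<in> {Xm..a} - {..a}. f x \<noteq> 0} = {}"
    "{x \<in> {b..} - {b..Xp}. f x \<noteq> 0} = {}" "{x \<in> {b..Xp} - {b..}. f x \<noteq> 0} = {}"
    using f0 \<open>Xm \<le> a\<close> \<open>a < b\<close> \<open>b \<le> Xp\<close> by auto
  have "integral {..a} f = integral {Xm..a} f" "integral {b..} f = integral {b..Xp} f"
    by (rule integral_spike_set; simp only: no_spikes negligible_empty)+
  moreover have "xminus A s = a" "xplus A s = b"
    using level \<open>a < b\<close> by (simp_all add: xminus_def xplus_def)
  ultimately show ?thesis by (simp add: Xi_tail_def f_def[abs_def] algebra_simps)
qed

lemma sums_odd_powers_at_imaginary_point: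
  fixes e :: "nat \<Rightarrow> real" and s X :: real
  assumes "(\<lambda>n. e n * s ^ (2 * n + 1)) sums X"
  shows "complex_of_real X = \<i> * (\<Sum>n. of_real ((-1) ^ Suc n * e n) * (\<i> * of_real s) ^ (2 * n + 1))"
proof -
  have "of_real ((-1) ^ Suc n * e n) * (\<i> * of_real s) ^ (2 * n + 1) = - \<i> * of_real (e n * s ^ (2 * n + 1))"
    for n :: nat
  proof -
    have "(\<i> * complex_of_real s) ^ (2 * n + 1) = \<i> * (-1) ^ n * of_real (s ^ (2 * n + 1))"
      by (simp add: power_mult_distrib power_add power_mult power_minus[of "(complex_of_real s)\<^sup>2"])
    moreover have "(-1::complex) ^ Suc n * (-1) ^ n = - 1" by (simp flip: power_add)
    ultimately show ?thesis by (simp add: algebra_simps)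
  qed
  moreover have "(\<lambda>n. - \<i> * complex_of_real (e n * s ^ (2 * n + 1))) sums (- \<i> * of_real X)"
    by (rule sums_mult[OF assms[THEN sums_of_real]])
  ultimately have "(\<Sum>n. of_real ((-1) ^ Suc n * e n) * (\<i> * of_real s) ^ (2 * n + 1)) = - \<i> * of_real X"
    by (simp only: sums_unique[symmetric])
  then show ?thesis by simp
qed

context semicircular_profile
begin

lemma Xi_tail_odd_series:
  assumes outside: "\<And>x. x \<notin> {Xm..Xp} \<Longrightarrow> A x = 0"
    and two_levels: "\<And>s. 0 < s \<Longrightarrow> s < A x0 \<Longrightarrow> card {x. A x = s} = 2"
  obtains e r where "e 0 = Xm + Xp" "r > 0"
    "\<And>t. 0 \<le> t \<Longrightarrow> t < r \<Longrightarrow> summable (\<lambda>n. \<bar>e n\<bar> * t ^ (2 * n + 1))"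
    "\<And>s. 0 < s \<Longrightarrow> s < r \<Longrightarrow> s < A x0 \<Longrightarrow> (\<lambda>n. e n * s ^ (2 * n + 1)) sums Xi_tail A s"
proof -
  obtain \<beta>L \<rho>L where "\<beta>L 0 = Xm" "\<rho>L > 0"
    and summable_L: "\<And>t. 0 \<le> t \<Longrightarrow> t < \<rho>L \<Longrightarrow> summable (\<lambda>n. \<bar>\<beta>L n\<bar> * t ^ (2 * n + 1))"
    and sums_L: "\<And>s y. 0 < s \<Longrightarrow> s < \<rho>L \<Longrightarrow> Xm \<le> y \<Longrightarrow> A y = s \<Longrightarrow>
                   (\<And>x. Xm \<le> x \<Longrightarrow> x < y \<Longrightarrow> A x < s) \<Longrightarrow>
                   (\<lambda>n. \<beta>L n * s ^ (2 * n + 1)) sums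
                     (y * s + integral {Xm..y} (\<lambda>x. sqrt (s\<^sup>2 - (A x)\<^sup>2) - s))"
    using left_end_series by blast
  obtain \<beta>R \<rho>R where "\<beta>R 0 = - Xp" "\<rho>R > 0"
    and summable_R: "\<And>t. 0 \<le> t \<Longrightarrow> t < \<rho>R \<Longrightarrow> summable (\<lambda>n. \<bar>\<beta>R n\<bar> * t ^ (2 * n + 1))"
    and sums_R: "\<And>s y. 0 < s \<Longrightarrow> s < \<rho>R \<Longrightarrow> y \<le> Xp \<Longrightarrow> A y = s \<Longrightarrow>
                   (\<And>x. y < x \<Longrightarrow> x \<le> Xp \<Longrightarrow> A x < s) \<Longrightarrow>
                   (\<lambda>n. \<beta>R n * s ^ (2 * n + 1)) sums
                     (- y * s + integral {y..Xp} (\<lambda>x. sqrt (s\<^sup>2 - (A x)\<^sup>2) - s))"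
    using right_end_series by blast
  have "summable (\<lambda>n. \<bar>\<beta>L n - \<beta>R n\<bar> * t ^ (2 * n + 1))" if "0 \<le> t" "t < min \<rho>L \<rho>R" for t
    by (rule summable_comparison_test'[where N = 0, OF summable_add[OF summable_L summable_R]])
      (use that in \<open>auto simp flip: distrib_right intro!: mult_right_mono abs_triangle_ineq4\<close>)
  moreover have "(\<lambda>n. (\<beta>L n - \<beta>R n) * s ^ (2 * n + 1)) sums Xi_tail A s"
    if s: "0 < s" "s < min \<rho>L \<rho>R" "s < A x0" for s
  proof -
    have "A Xm = 0" "A Xp = 0" using semicircle ends by auto
    then obtain a b where ab: "Xm \<le> a" "a < b" "b \<le> Xp" "{x. A x = s} = {a, b}"
      and "\<And>x. Xm \<le> x \<Longrightarrow> x < a \<Longrightarrow> A x < s" "\<And>x. b < x \<Longrightarrow> x \<le> Xp \<Longrightarrow> A x < s"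
      using level_set_two_points[OF continuous_on_profile _ _ outside s(1,3) two_levels[OF s(1,3)]]
      by blast
    moreover have "A a = s" "A b = s" using ab(4) by auto
    ultimately show ?thesis
      using sums_diff[OF sums_L sums_R] s ab
        Xi_tail_eq_end_contributions[OF outside s(1) ab(4,1,2,3)]
      by (simp add: left_diff_distrib)
  qed
  moreover have "\<beta>L 0 - \<beta>R 0 = Xm + Xp" using \<open>\<beta>L 0 = Xm\<close> \<open>\<beta>R 0 = - Xp\<close> by simp
  ultimately show ?thesis using that[of "\<lambda>n. \<beta>L n - \<beta>R n" "min \<rho>L \<rho>R"] \<open>\<rho>L > 0\<close> \<open>\<rho>R > 0\<close> by simp
qed

end

theorem proposition2:
  fixes A u A' A'' :: "real \<Rightarrow> real" and Xm Xp c x0 :: real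
  assumes interval: "Xm < Xp"
    and nonneg: "\<forall>x. A x \<ge> 0"
    and outside: "\<forall>x. x \<notin> {Xm..Xp} \<longrightarrow> A x = 0"
    and semicirc: "\<forall>x\<in>{Xm..Xp}. A x = u x * sqrt ((Xp - x) * (x - Xm))"
    and c_pos: "c > 0" and u_ge: "\<forall>x\<in>{Xm..Xp}. u x \<ge> c"
    and u_analytic: "\<exists>U g. open U \<and> complex_of_real ` {Xm..Xp} \<subseteq> U \<and> g holomorphic_on U
                      \<and> (\<forall>x\<in>{Xm..Xp}. g (complex_of_real x) = complex_of_real (u x))"
    and L1: "integrable lborel A"
    and cont: "continuous_on UNIV A"
    and C2: "\<forall>x\<in>{Xm<..<Xp}. (A has_real_derivative A' x) (at x)
                              \<and> (A' has_real_derivative A'' x) (at x)"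
    and C2_cont: "continuous_on {Xm<..<Xp} A''"
    and max: "\<forall>x. A x \<le> A x0"
    and max_unique: "\<forall>x. A x = A x0 \<longrightarrow> x = x0"
    and max_nondeg: "A'' x0 < 0"
    and two_levels: "\<forall>s. 0 < s \<and> s < A x0 \<longrightarrow> card {x. A x = s} = 2"
  shows "\<exists>(XiC :: nat \<Rightarrow> real) r. r > 0 \<and>
           (\<forall>z::complex. norm z < r \<longrightarrow>
               summable (\<lambda>k. complex_of_real (XiC (Suc k)) * z ^ (2 * Suc k - 1))) \<and>
           (\<forall>s. 0 < s \<and> s < r \<and> s < A x0 \<longrightarrow>
               complex_of_real (Xi_tail A s)
                 = \<i> * (\<Sum>k. complex_of_real (XiC (Suc k)) * (\<i> * complex_of_real s) ^ (2 * Suc k - 1))) \<and>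
           XiC 1 = - (Xp + Xm)"
proof -
  \<comment> \<open>Only \<open>interval\<close>, \<open>outside\<close>, \<open>semicirc\<close>, \<open>c_pos\<close>, \<open>u_ge\<close>, \<open>u_analytic\<close> and
    \<open>two_levels\<close> are needed.\<close>
  obtain U g where "open U" "complex_of_real ` {Xm..Xp} \<subseteq> U" "g holomorphic_on U"
    and "\<forall>x\<in>{Xm..Xp}. g (complex_of_real x) = complex_of_real (u x)"
    using u_analytic by blast
  moreover have "\<forall>x\<in>{Xm..Xp}. u x > 0" using u_ge c_pos by force
  ultimately interpret semicircular_profile A u g U Xm Xp
    using interval semicirc by unfold_locales auto
  obtain e r where "e 0 = Xm + Xp" "r > 0"
    and summable: "\<And>t. 0 \<le> t \<Longrightarrow> t < r \<Longrightarrow> summable (\<lambda>n. \<bar>e n\<bar> * t ^ (2 * n + 1))"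
    and sums: "\<And>s. 0 < s \<Longrightarrow> s < r \<Longrightarrow> s < A x0 \<Longrightarrow> (\<lambda>n. e n * s ^ (2 * n + 1)) sums Xi_tail A s"
    using Xi_tail_odd_series outside two_levels by blast
  define XiC where "XiC k = (case k of 0 \<Rightarrow> 0 | Suc j \<Rightarrow> (-1) ^ k * e j)" for k
  have XiC_terms: "complex_of_real (XiC (Suc k)) * z ^ (2 * Suc k - 1) = of_real ((-1) ^ Suc k * e k) * z ^ (2 * k + 1)"
    for k and z :: complex
    by (simp add: XiC_def)
  show ?thesis
  proof (intro exI[of _ XiC] exI[of _ r] conjI allI impI)
    fix z :: complex
    assume "norm z < r"
    then have "summable (\<lambda>k. norm (of_real ((-1) ^ Suc k * e k) * z ^ (2 * k + 1)))"
      using summable[of "norm z"] by (simp add: norm_mult norm_power abs_mult)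
    then show "summable (\<lambda>k. complex_of_real (XiC (Suc k)) * z ^ (2 * Suc k - 1))"
      unfolding XiC_terms by (rule summable_norm_cancel)
  next
    fix s :: real
    assume "0 < s \<and> s < r \<and> s < A x0"
    then show "complex_of_real (Xi_tail A s)
                 = \<i> * (\<Sum>k. complex_of_real (XiC (Suc k)) * (\<i> * complex_of_real s) ^ (2 * Suc k - 1))"
      unfolding XiC_terms by (intro sums_odd_powers_at_imaginary_point sums) auto
  qed (use \<open>r > 0\<close> \<open>e 0 = Xm + Xp\<close> in \<open>simp_all add: XiC_def\<close>)
qed

end
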